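(* Let $j_1,j_2\in\tfrac12\mathbb{N}^+$ and write $R^{(j_1,j_2)}(t)$ as a $(2j_1+1)\times(2j_1+1)$ block matrix with blocks of size $(2j_2+1)\times(2j_2+1)$. Then for $1\le a,b\le 2j_1+1$ the $(a,b)$-block is an $(a-b)$-diagonal matrix if $|a-b|\le 2j_2$, and is zero if $|a-b|\ge 2j_2+1$. Here a square matrix is called $c$-diagonal if its $(i,k)$-entry is zero whenever $k-i\ne c$.
   Context: $\mathbb{F}$ is a field of characteristic zero in which every element has a square root; $q\in\mathbb{F}$ nonzero, not a root of unity, with fixed square root $q^{1/2}$ ($q^{k/2}:=(q^{1/2})^k$); other $(\cdot)^{1/2}$ are fixed square roots in $\mathbb{F}$. $[n]_q=\frac{q^n-q^{-n}}{q-q^{-1}}$, $c(t)=t-t^{-1}$, $\tfrac12\mathbb{N}^+=\{\tfrac12,1,\tfrac32,\dots\}$, $t$ an indeterminate, $\otimes$ Kronecker product. Leg notation: for factors $\mathbb{F}^{n_1}\otimes\mathbb{F}^{n_2}\otimes\mathbb{F}^{n_3}$, $X_{12}=X\otimes I_{n_3}$, $X_{23}=I_{n_1}\otimes X$, $X_{13}=P(X\otimes I_{n_2})P$ with $P$ the flip of factors 2,3; for non-square $Y$, $Y_{12}=Y\otimes I_{n_3}$, $Y_{23}=I_{n_1}\otimes Y$. For $j\in\tfrac12\mathbb{N}^+$: $\mathcal{E}^{(j+\frac12)}$ is $(4j+2)\times(2j+2)$ with only nonzero entries $\mathcal{E}_{(a,a)}=\big(\frac{[2j+2-a]_q}{[2j+1]_q}\big)^{1/2}$,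 $\mathcal{E}_{(a+2j+1,a+1)}=\big(\frac{[a]_q}{[2j+1]_q}\big)^{1/2}$ ($1\le a\le 2j+1$); $\mathcal{F}^{(j+\frac12)}$ is $(2j+2)\times(4j+2)$ with only nonzero entries $\mathcal{F}_{(a,a)}=\frac{([2j+2-a]_q[2j+1]_q)^{1/2}}{[2j+2-a]_q+[a-1]_q}$, $\mathcal{F}_{(a+1,a+2j+1)}=\frac{([a]_q[2j+1]_q)^{1/2}}{[2j+1-a]_q+[a]_q}$ ($1\le a\le 2j+1$). $R^{(\frac12,\frac12)}(t)$ is the $4\times4$ matrix with rows $(c(qt),0,0,0),(0,c(t),c(q),0),(0,c(q),c(t),0),(0,0,0,c(qt))$; recursively $R^{(\frac12,j+\frac12)}(t)=\mathcal{F}^{(j+\frac12)}_{23}R^{(\frac12,j)}_{13}(q^{-1/2}t)R^{(\frac12,\frac12)}_{12}(q^{j}t)\mathcal{E}^{(j+\frac12)}_{23}$ (factor sizes $2,2,2j+1$) and $R^{(j_1+\frac12,j_2)}(t)=\mathcal{F}^{(j_1+\frac12)}_{12}R^{(\frac12,j_2)}_{13}(q^{-j_1}t)R^{(j_1,j_2)}_{23}(q^{1/2}t)\mathcal{E}^{(j_1+\frac12)}_{12}$ (factor sizes $2,2j_1+1,2j_2+1$). *)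

theory Defs
  imports "Jordan_Normal_Form.Matrix"
begin

(* Kronecker product of matrices (index (i1,i2) |-> i1 * dim B + i2) *)
definition kron :: "'a::semiring_1 mat \<Rightarrow> 'a mat \<Rightarrow> 'a mat" where
  "kron A B = mat (dim_row A * dim_row B) (dim_col A * dim_col B)
     (\<lambda>(i,j). A $$ (i div dim_row B, j div dim_col B) * B $$ (i mod dim_row B, j mod dim_col B))"

(* flip of factors 2,3: permutation matrix mapping F^n1 (x) F^n2 (x) F^n3 to F^n1 (x) F^n3 (x) F^n2,
   e_a (x) e_b (x) e_c |-> e_a (x) e_c (x) e_b *)
definition flip23 :: "nat \<Rightarrow> nat \<Rightarrow> nat \<Rightarrow> 'a::semiring_1 mat" where
  "flip23 n1 n2 n3 = mat (n1*n2*n3) (n1*n2*n3)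
     (\<lambda>(r,s). if r = (s div (n2*n3)) * (n3*n2) + (s mod n3) * n2 + (s div n3) mod n2
              then 1 else 0)"

definition leg12 :: "'a::semiring_1 mat \<Rightarrow> nat \<Rightarrow> 'a mat" where
  "leg12 X n3 = kron X (1\<^sub>m n3)"
definition leg23 :: "nat \<Rightarrow> 'a::semiring_1 mat \<Rightarrow> 'a mat" where
  "leg23 n1 X = kron (1\<^sub>m n1) X"
definition leg13 :: "nat \<Rightarrow> nat \<Rightarrow> nat \<Rightarrow> 'a::semiring_1 mat \<Rightarrow> 'a mat" where
  "leg13 n1 n2 n3 X = flip23 n1 n3 n2 * kron X (1\<^sub>m n2) * flip23 n1 n2 n3"

definition qnum :: "'a::field \<Rightarrow> int \<Rightarrow> 'a" where
  "qnum q n = (q powi n - q powi (-n)) / (q - inverse q)"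

definition cfun :: "'a::field \<Rightarrow> 'a" where
  "cfun t = t - inverse t"

(* E^{(j+1/2)} with m = 2j; size (2m+2) x (m+2); 0-indexed version of the 1-indexed definition;
   sq is the fixed square-root function *)
definition Emat :: "('a::field \<Rightarrow> 'a) \<Rightarrow> 'a \<Rightarrow> nat \<Rightarrow> 'a mat" where
  "Emat sq q m = mat (2*m+2) (m+2) (\<lambda>(r,s).
     if r = s \<and> 1 \<le> r+1 \<and> r+1 \<le> m+1
       then sq (qnum q (int m + 2 - int (r+1)) / qnum q (int m + 1))
     else if m+1 \<le> r \<and> s = r - m \<and> 1 \<le> r - m \<and> r - m \<le> m+1
       then sq (qnum q (int (r - m)) / qnum q (int m + 1))
     else 0)"

(* F^{(j+1/2)} with m = 2j; size (m+2) x (2m+2) *)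
definition Fmat :: "('a::field \<Rightarrow> 'a) \<Rightarrow> 'a \<Rightarrow> nat \<Rightarrow> 'a mat" where
  "Fmat sq q m = mat (m+2) (2*m+2) (\<lambda>(r,s).
     if r = s \<and> 1 \<le> r+1 \<and> r+1 \<le> m+1
       then sq (qnum q (int m + 2 - int (r+1)) * qnum q (int m + 1))
            / (qnum q (int m + 2 - int (r+1)) + qnum q (int (r+1) - 1))
     else if m+1 \<le> s \<and> r = s - m \<and> 1 \<le> s - m \<and> s - m \<le> m+1
       then sq (qnum q (int (s - m)) * qnum q (int m + 1))
            / (qnum q (int m + 1 - int (s - m)) + qnum q (int (s - m)))
     else 0)"

definition Rbase :: "'a::field \<Rightarrow> 'a \<Rightarrow> 'a mat" where
  "Rbase q t = mat 4 4 (\<lambda>(r,s).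
     if (r = 0 \<and> s = 0) \<or> (r = 3 \<and> s = 3) then cfun (q*t)
     else if (r = 1 \<and> s = 1) \<or> (r = 2 \<and> s = 2) then cfun t
     else if (r = 1 \<and> s = 2) \<or> (r = 2 \<and> s = 1) then cfun q
     else 0)"

(* Rmat sq qh n1 n2 t = R^{(j1,j2)}(t) with n1 = 2 j1, n2 = 2 j2 (both \<ge> 1);
   qh is the fixed square root q^{1/2}, q = qh^2 *)
fun Rmat :: "('a::field \<Rightarrow> 'a) \<Rightarrow> 'a \<Rightarrow> nat \<Rightarrow> nat \<Rightarrow> 'a \<Rightarrow> 'a mat" where
  "Rmat sq qh (Suc 0) (Suc 0) t = Rbase (qh^2) t"
| "Rmat sq qh (Suc 0) (Suc (Suc m)) t =
     leg23 2 (Fmat sq (qh^2) (Suc m))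
     * leg13 2 2 (m+2) (Rmat sq qh (Suc 0) (Suc m) (t / qh))
     * leg12 (Rbase (qh^2) (qh^(Suc m) * t)) (m+2)
     * leg23 2 (Emat sq (qh^2) (Suc m))"
| "Rmat sq qh (Suc (Suc n)) m t =
     leg12 (Fmat sq (qh^2) (Suc n)) (m+1)
     * leg13 2 (n+2) (m+1) (Rmat sq qh (Suc 0) m (t / qh^(Suc n)))
     * leg23 2 (Rmat sq qh (Suc n) m (qh * t))
     * leg12 (Emat sq (qh^2) (Suc n)) (m+1)"
| "Rmat sq qh 0 m t = 0\<^sub>m 0 0"
| "Rmat sq qh (Suc 0) 0 t = 0\<^sub>m 0 0"

definition blk :: "'a mat \<Rightarrow> nat \<Rightarrow> nat \<Rightarrow> nat \<Rightarrow> 'a mat" where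
  "blk M p a b = mat p p (\<lambda>(i,k). M $$ ((a-1)*p + i, (b-1)*p + k))"

definition c_diagonal :: "int \<Rightarrow> 'a::zero mat \<Rightarrow> bool" where
  "c_diagonal c M = (\<forall>i < dim_row M. \<forall>k < dim_col M. int k - int i \<noteq> c \<longrightarrow> M $$ (i,k) = 0)"

end

theory Submission
  imports Defs
begin

(* Give the basis vector e_i1 (x) ... (x) e_ir (0-indexed) the weight i1 + ... + ir.  E, F and
   R^(1/2,1/2) only connect basis vectors of equal weight, as do identities and the flip of two
   tensor factors, and this selection rule survives Kronecker and matrix products; so by the
   recursion R^(j1,j2)(t) is weight preserving.  The (i,k) entry of its (a,b) block connects
   weights (a-1)+i and (b-1)+k, hence vanishes unless k - i = a - b.  Nothing about q, t or the
   square roots is used. *)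

definition weight_preserving :: "(nat \<Rightarrow> nat) \<Rightarrow> (nat \<Rightarrow> nat) \<Rightarrow> 'a::zero mat \<Rightarrow> bool" where
  "weight_preserving wr wc M \<longleftrightarrow>
     (\<forall>i < dim_row M. \<forall>j < dim_col M. wr i \<noteq> wc j \<longrightarrow> M $$ (i,j) = 0)"

text \<open>The sum of the tensor coordinates of an index into \<open>F\<^sup>m \<otimes> F\<^sup>p\<close>, resp.
  \<open>F\<^sup>m \<otimes> F\<^sup>p \<otimes> F\<^sup>q\<close>, in the index convention of \<^const>\<open>kron\<close>.\<close>

definition weight2 :: "nat \<Rightarrow> nat \<Rightarrow> nat" where
  "weight2 p i = i div p + i mod p"

definition weight3 :: "nat \<Rightarrow> nat \<Rightarrow> nat \<Rightarrow> nat" where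
  "weight3 p q i = i div (p*q) + (i div q) mod p + i mod q"

lemma weight3_split_first: "i div (p*q) + weight2 q (i mod (p*q)) = weight3 p q i"
proof (cases "q = 0")
  case False
  have mod_pq: "i mod (p*q) = q * (i div q mod p) + i mod q"
    by (metis mod_mult2_eq mult.commute)
  have div_pq: "i div (p*q) = i div q div p"
    by (metis div_mult2_eq mult.commute)
  have "(q * (i div q mod p) + i mod q) div q = i div q mod p"
    using False by simp
  then show ?thesis
    unfolding weight2_def weight3_def mod_pq div_pq by simp
qed (simp add: weight2_def weight3_def)

lemma weight3_split_last: "weight2 p (i div q) + i mod q = weight3 p q i"
proof -
  have "i div (p*q) = i div q div p"
    by (metis div_mult2_eq mult.commute)
  then show ?thesis
    unfolding weight2_def weight3_def by simp
qed

lemma weight3_index: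
  assumes "k < q" "j < p"
  shows "weight3 p q (i*(p*q) + j*q + k) = i + j + k"
proof -
  have "j*q + k < (j+1)*q"
    using assms by simp
  also have "\<dots> \<le> p*q"
    using assms by (intro mult_right_mono) auto
  finally have "(i*(p*q) + (j*q + k)) div (p*q) = i"
    by (simp only: div_mult_self3[OF gr_implies_not0] div_less add_0_right)
  then have "(i*(p*q) + j*q + k) div (p*q) = i"
    by (simp add: add.assoc)
  then show ?thesis
    using assms by (simp add: weight3_def add.assoc mult.assoc[symmetric])
qed

lemma weight2_block_index: "i < p \<Longrightarrow> weight2 p ((a-1)*p + i) = (a-1) + i"
  unfolding weight2_def by simp

lemma weight_preserving_mult:
  fixes A B :: "'a::semiring_0 mat"
  assumes A: "weight_preserving wr w A" and B: "weight_preserving w wc B"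
    and dim: "dim_col A = dim_row B"
  shows "weight_preserving wr wc (A * B)"
  unfolding weight_preserving_def
proof (intro allI impI)
  fix i j assume i: "i < dim_row (A*B)" and j: "j < dim_col (A*B)" and ne: "wr i \<noteq> wc j"
  have "A $$ (i,k) * B $$ (k,j) = 0" if k: "k < dim_row B" for k
  proof (cases "wr i = w k")
    case True
    then show ?thesis using B k j ne unfolding weight_preserving_def by auto
  next
    case False
    then show ?thesis using A dim k i unfolding weight_preserving_def by auto
  qed
  then show "(A*B) $$ (i,j) = 0"
    using i j dim by (simp add: scalar_prod_def)
qed

lemma weight_preserving_cong:
  assumes "weight_preserving wr wc M"
    and "\<And>i. i < dim_row M \<Longrightarrow> wr i = wr' i" "\<And>j. j < dim_col M \<Longrightarrow> wc j = wc' j"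
  shows "weight_preserving wr' wc' M"
  using assms unfolding weight_preserving_def by metis

lemma dim_kron [simp]:
  "dim_row (kron A B) = dim_row A * dim_row B" "dim_col (kron A B) = dim_col A * dim_col B"
  unfolding kron_def by auto

lemma weight_preserving_kron:
  fixes A B :: "'a::semiring_1 mat"
  assumes A: "weight_preserving ar ac A" and B: "weight_preserving br bc B"
  shows "weight_preserving (\<lambda>i. ar (i div dim_row B) + br (i mod dim_row B))
           (\<lambda>j. ac (j div dim_col B) + bc (j mod dim_col B)) (kron A B)"
  unfolding weight_preserving_def
proof (intro allI impI)
  fix i j assume i: "i < dim_row (kron A B)" and j: "j < dim_col (kron A B)"
    and ne: "ar (i div dim_row B) + br (i mod dim_row B) \<noteq> ac (j div dim_col B) + bc (j mod dim_col B)"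
  have "dim_row B > 0" "dim_col B > 0"
    using i j by (auto intro!: gr0I)
  then have idx: "i div dim_row B < dim_row A" "i mod dim_row B < dim_row B"
    "j div dim_col B < dim_col A" "j mod dim_col B < dim_col B"
    using i j by (auto simp: less_mult_imp_div_less mult.commute)
  have "kron A B $$ (i,j) = A $$ (i div dim_row B, j div dim_col B) * B $$ (i mod dim_row B, j mod dim_col B)"
    using i j unfolding kron_def by simp
  then show "kron A B $$ (i,j) = 0"
    using A B idx ne unfolding weight_preserving_def by (cases "ar (i div dim_row B) = ac (j div dim_col B)") auto
qed

lemma weight_preserving_one: "weight_preserving id id (1\<^sub>m n :: 'a::semiring_1 mat)"
  unfolding weight_preserving_def by auto

lemma dim_Emat [simp]: "dim_row (Emat sq q m) = 2*m+2" "dim_col (Emat sq q m) = m+2"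
  by (auto simp: Emat_def)

lemma dim_Fmat [simp]: "dim_row (Fmat sq q m) = m+2" "dim_col (Fmat sq q m) = 2*m+2"
  by (auto simp: Fmat_def)

lemma dim_Rbase [simp]: "dim_row (Rbase q t) = 4" "dim_col (Rbase q t) = 4"
  by (auto simp: Rbase_def)

lemma dim_flip23 [simp]:
  "dim_row (flip23 n1 n2 n3 :: 'a::semiring_1 mat) = n1*n2*n3"
  "dim_col (flip23 n1 n2 n3 :: 'a::semiring_1 mat) = n1*n2*n3"
  by (auto simp: flip23_def)

lemma dim_leg12 [simp]: "dim_row (leg12 X n) = dim_row X * n" "dim_col (leg12 X n) = dim_col X * n"
  by (auto simp: leg12_def)

lemma dim_leg23 [simp]: "dim_row (leg23 n X) = n * dim_row X" "dim_col (leg23 n X) = n * dim_col X"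
  by (auto simp: leg23_def)

lemma weight_preserving_Emat: "weight_preserving (weight2 (m+1)) id (Emat sq q m)"
  unfolding weight_preserving_def weight2_def
proof (intro allI impI)
  fix r s assume r: "r < dim_row (Emat sq q m)" and s: "s < dim_col (Emat sq q m)"
    and ne: "r div (m+1) + r mod (m+1) \<noteq> id s"
  show "Emat sq q m $$ (r,s) = 0"
  proof (cases "r \<le> m")
    case False
    then have "r div (m+1) = 1" "r mod (m+1) = r - m - 1"
      using r by (auto simp: div_if mod_if)
    then show ?thesis using r s ne False by (auto simp: Emat_def)
  qed (use r s ne in \<open>auto simp: Emat_def\<close>)
qed

lemma weight_preserving_Fmat: "weight_preserving id (weight2 (m+1)) (Fmat sq q m)"
  unfolding weight_preserving_def weight2_def
proof (intro allI impI)
  fix r s assume r: "r < dim_row (Fmat sq q m)" and s: "s < dim_col (Fmat sq q m)"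
    and ne: "id r \<noteq> s div (m+1) + s mod (m+1)"
  show "Fmat sq q m $$ (r,s) = 0"
  proof (cases "s \<le> m")
    case False
    then have "s div (m+1) = 1" "s mod (m+1) = s - m - 1"
      using s by (auto simp: div_if mod_if)
    then show ?thesis using r s ne False by (auto simp: Fmat_def)
  qed (use r s ne in \<open>auto simp: Fmat_def\<close>)
qed

lemma weight_preserving_Rbase: "weight_preserving (weight2 2) (weight2 2) (Rbase q t)"
  unfolding weight_preserving_def weight2_def
proof (intro allI impI)
  fix r s assume "r < dim_row (Rbase q t)" "s < dim_col (Rbase q t)"
    and ne: "r div 2 + r mod 2 \<noteq> s div 2 + s mod 2"
  then have "r \<in> {0,1,2,3}" "s \<in> {0,1,2,3}"
    by auto
  then show "Rbase q t $$ (r,s) = 0"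
    using ne by (auto simp: Rbase_def)
qed

lemma weight_preserving_flip23:
  "weight_preserving (weight3 n3 n2) (weight3 n2 n3) (flip23 n1 n2 n3 :: 'a::semiring_1 mat)"
  unfolding weight_preserving_def
proof (intro allI impI)
  fix r s assume r: "r < dim_row (flip23 n1 n2 n3 :: 'a mat)" and s: "s < dim_col (flip23 n1 n2 n3 :: 'a mat)"
    and ne: "weight3 n3 n2 r \<noteq> weight3 n2 n3 s"
  show "(flip23 n1 n2 n3 :: 'a mat) $$ (r,s) = 0"
  proof (rule ccontr)
    assume "(flip23 n1 n2 n3 :: 'a mat) $$ (r,s) \<noteq> 0"
    then have r_eq: "r = (s div (n2*n3)) * (n3*n2) + (s mod n3) * n2 + (s div n3) mod n2"
      using r s by (auto simp: flip23_def split: if_splits)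
    have "n2 > 0" "n3 > 0"
      using s by (auto intro: Nat.gr0I)
    then have "weight3 n3 n2 r = s div (n2*n3) + s mod n3 + (s div n3) mod n2"
      unfolding r_eq by (intro weight3_index) auto
    also have "\<dots> = weight3 n2 n3 s"
      unfolding weight3_def by simp
    finally show False using ne by simp
  qed
qed

lemma weight_preserving_leg12:
  fixes X :: "'a::semiring_1 mat"
  assumes "weight_preserving (weight2 q) (weight2 q) X"
  shows "weight_preserving (weight3 q n) (weight3 q n) (leg12 X n)"
  using weight_preserving_kron[OF assms weight_preserving_one[where n=n]] unfolding leg12_def
  by (rule weight_preserving_cong) (auto simp: weight3_split_last)

lemma weight_preserving_leg23:
  fixes X :: "'a::semiring_1 mat"
  assumes "weight_preserving (weight2 q) (weight2 q) X" "X \<in> carrier_mat (p*q) (p*q)"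
  shows "weight_preserving (weight3 p q) (weight3 p q) (leg23 n X)"
  using weight_preserving_kron[OF weight_preserving_one[where n=n] assms(1)] unfolding leg23_def
  by (rule weight_preserving_cong) (use assms(2) in \<open>auto simp: weight3_split_first[symmetric]\<close>)

lemma weight_preserving_leg13:
  fixes X :: "'a::semiring_1 mat"
  assumes "weight_preserving (weight2 n3) (weight2 n3) X" "X \<in> carrier_mat (n1*n3) (n1*n3)"
  shows "weight_preserving (weight3 n2 n3) (weight3 n2 n3) (leg13 n1 n2 n3 X)"
proof -
  have "weight_preserving (weight3 n3 n2) (weight3 n3 n2) (kron X (1\<^sub>m n2))"
    using weight_preserving_leg12[OF assms(1)] unfolding leg12_def .
  then show ?thesis
    unfolding leg13_def using assms(2)
    by (intro weight_preserving_mult[OF weight_preserving_mult[OF weight_preserving_flip23]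
        weight_preserving_flip23]) (auto simp: ac_simps)
qed

lemma leg13_carrier:
  "X \<in> carrier_mat (n1*n3) (n1*n3) \<Longrightarrow> leg13 n1 n2 n3 X \<in> carrier_mat (n1*n2*n3) (n1*n2*n3)"
  unfolding leg13_def leg12_def by (auto simp: ac_simps)

lemma weight_preserving_leg12_Fmat:
  "weight_preserving (weight2 (n+1)) (weight3 (m+1) (n+1)) (leg12 (Fmat sq q m) (n+1))"
  using weight_preserving_kron[OF weight_preserving_Fmat weight_preserving_one[where n="n+1"]]
  unfolding leg12_def
  by (rule weight_preserving_cong) (auto simp: weight3_split_last[symmetric] weight2_def)

lemma weight_preserving_leg12_Emat:
  "weight_preserving (weight3 (m+1) (n+1)) (weight2 (n+1)) (leg12 (Emat sq q m) (n+1))"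
  using weight_preserving_kron[OF weight_preserving_Emat weight_preserving_one[where n="n+1"]]
  unfolding leg12_def
  by (rule weight_preserving_cong) (auto simp: weight3_split_last[symmetric] weight2_def)

lemma weight_preserving_leg23_Fmat:
  "weight_preserving (weight2 (m+2)) (weight3 2 (m+1)) (leg23 n (Fmat sq q m))"
  using weight_preserving_kron[OF weight_preserving_one[where n=n] weight_preserving_Fmat]
  unfolding leg23_def
  by (rule weight_preserving_cong) (auto simp: weight3_split_first[symmetric] weight2_def mult_2 add.commute)

lemma weight_preserving_leg23_Emat:
  "weight_preserving (weight3 2 (m+1)) (weight2 (m+2)) (leg23 n (Emat sq q m))"
  using weight_preserving_kron[OF weight_preserving_one[where n=n] weight_preserving_Emat]
  unfolding leg23_def
  by (rule weight_preserving_cong) (auto simp: weight3_split_first[symmetric] weight2_def mult_2 add.commute)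

lemma Rmat_carrier:
  "n1 \<ge> 1 \<Longrightarrow> n2 \<ge> 1 \<Longrightarrow> Rmat sq qh n1 n2 t \<in> carrier_mat ((n1+1)*(n2+1)) ((n1+1)*(n2+1))"
  by (induction sq qh n1 n2 t rule: Rmat.induct) (auto simp: numeral_eq_Suc)

lemma weight_preserving_Rmat:
  "n1 \<ge> 1 \<Longrightarrow> n2 \<ge> 1 \<Longrightarrow>
    weight_preserving (weight2 (n2+1)) (weight2 (n2+1)) (Rmat sq qh n1 n2 t)"
proof (induction sq qh n1 n2 t rule: Rmat.induct)
  case (1 sq qh t)
  then show ?case
    using weight_preserving_Rbase by (simp add: numeral_2_eq_2)
next
  case (2 sq qh m t)
  let ?X = "Rmat sq qh 1 (Suc m) (t / qh)"
  have X: "weight_preserving (weight2 (m+2)) (weight2 (m+2)) ?X"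
    "?X \<in> carrier_mat (2*(m+2)) (2*(m+2))"
    using 2 Rmat_carrier[of 1 "Suc m"] by (auto simp: numeral_2_eq_2)
  have F: "weight_preserving (weight2 (m+3)) (weight3 2 (m+2)) (leg23 2 (Fmat sq (qh^2) (Suc m)))"
    using weight_preserving_leg23_Fmat[of "Suc m"] by (simp add: numeral_eq_Suc)
  have E: "weight_preserving (weight3 2 (m+2)) (weight2 (m+3)) (leg23 2 (Emat sq (qh^2) (Suc m)))"
    using weight_preserving_leg23_Emat[of "Suc m"] by (simp add: numeral_eq_Suc)
  have "weight_preserving (weight2 (m+3)) (weight2 (m+3))
     (leg23 2 (Fmat sq (qh^2) (Suc m)) * leg13 2 2 (m+2) ?X
      * leg12 (Rbase (qh^2) (qh^(Suc m) * t)) (m+2) * leg23 2 (Emat sq (qh^2) (Suc m)))"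
    using leg13_carrier[OF X(2), of 2]
    by (intro weight_preserving_mult[OF weight_preserving_mult[OF weight_preserving_mult[OF F
        weight_preserving_leg13[OF X]] weight_preserving_leg12[OF weight_preserving_Rbase]] E]) auto
  then show ?case
    by (simp add: numeral_eq_Suc)
next
  case (3 sq qh n m t)
  let ?X1 = "Rmat sq qh 1 m (t / qh^(Suc n))" and ?X2 = "Rmat sq qh (Suc n) m (qh * t)"
  have X1: "weight_preserving (weight2 (m+1)) (weight2 (m+1)) ?X1"
    "?X1 \<in> carrier_mat (2*(m+1)) (2*(m+1))"
    using 3 Rmat_carrier[of 1 m] by (auto simp: numeral_2_eq_2)
  have X2: "weight_preserving (weight2 (m+1)) (weight2 (m+1)) ?X2"
    "?X2 \<in> carrier_mat ((n+2)*(m+1)) ((n+2)*(m+1))"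
    using 3 Rmat_carrier[of "Suc n" m] by auto
  have F: "weight_preserving (weight2 (m+1)) (weight3 (n+2) (m+1)) (leg12 (Fmat sq (qh^2) (Suc n)) (m+1))"
    using weight_preserving_leg12_Fmat[of m "Suc n"] by simp
  have E: "weight_preserving (weight3 (n+2) (m+1)) (weight2 (m+1)) (leg12 (Emat sq (qh^2) (Suc n)) (m+1))"
    using weight_preserving_leg12_Emat[of "Suc n" m] by simp
  have "weight_preserving (weight2 (m+1)) (weight2 (m+1))
     (leg12 (Fmat sq (qh^2) (Suc n)) (m+1) * leg13 2 (n+2) (m+1) ?X1
      * leg23 2 ?X2 * leg12 (Emat sq (qh^2) (Suc n)) (m+1))"
    using leg13_carrier[OF X1(2), of "n+2"] X2(2)
    by (intro weight_preserving_mult[OF weight_preserving_mult[OF weight_preserving_mult[OF F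
        weight_preserving_leg13[OF X1]] weight_preserving_leg23[OF X2]] E]) auto
  then show ?case
    by simp
qed auto

lemma c_diagonal_blk_if_weight_preserving:
  fixes M :: "'a::zero mat"
  assumes M: "weight_preserving (weight2 p) (weight2 p) M" "M \<in> carrier_mat (n*p) (n*p)"
    and ab: "1 \<le> a" "a \<le> n" "1 \<le> b" "b \<le> n"
  shows "c_diagonal (int a - int b) (blk M p a b)"
  unfolding c_diagonal_def
proof (intro allI impI)
  fix i k assume i: "i < dim_row (blk M p a b)" and k: "k < dim_col (blk M p a b)"
    and ne: "int k - int i \<noteq> int a - int b"
  have "i < p" "k < p"
    using i k by (simp_all add: blk_def)
  then have "weight2 p ((a-1)*p + i) = (a-1) + i" "weight2 p ((b-1)*p + k) = (b-1) + k"
    by (simp_all only: weight2_block_index)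
  then have "weight2 p ((a-1)*p + i) \<noteq> weight2 p ((b-1)*p + k)"
    using ne ab by linarith
  moreover have "(a-1)*p + i < n*p" "(b-1)*p + k < n*p"
    using \<open>i < p\<close> \<open>k < p\<close> ab mult_le_mono1[of a n p] mult_le_mono1[of b n p]
    by (cases a; cases b; simp)+
  ultimately have "M $$ ((a-1)*p + i, (b-1)*p + k) = 0"
    using M unfolding weight_preserving_def by auto
  then show "blk M p a b $$ (i,k) = 0"
    using i k by (simp add: blk_def)
qed

lemma c_diagonal_eq_zero:
  assumes "c_diagonal c A" "A \<in> carrier_mat p p" "\<bar>c\<bar> \<ge> int p"
  shows "A = 0\<^sub>m p p"
  using assms unfolding c_diagonal_def by (intro eq_matI) auto

theorem propositionA2:
  fixes sq :: "'a::field_char_0 \<Rightarrow> 'a" and qh t :: 'a and n1 n2 a b :: nat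
  assumes sq: "\<forall>x. sq x * sq x = x"
    and q_nz: "qh^2 \<noteq> 0"
    and q_not_root: "\<forall>k::nat. k > 0 \<longrightarrow> (qh^2)^k \<noteq> 1"
    and t_nz: "t \<noteq> 0"
    and n1: "n1 \<ge> 1" and n2: "n2 \<ge> 1"
    and ab: "1 \<le> a" "a \<le> n1 + 1" "1 \<le> b" "b \<le> n1 + 1"
  shows "(\<bar>int a - int b\<bar> \<le> int n2 \<longrightarrow>
            c_diagonal (int a - int b) (blk (Rmat sq qh n1 n2 t) (n2+1) a b))
       \<and> (\<bar>int a - int b\<bar> \<ge> int n2 + 1 \<longrightarrow>
            blk (Rmat sq qh n1 n2 t) (n2+1) a b = 0\<^sub>m (n2+1) (n2+1))"
proof -
  have "c_diagonal (int a - int b) (blk (Rmat sq qh n1 n2 t) (n2+1) a b)"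
    using weight_preserving_Rmat[OF n1 n2] Rmat_carrier[OF n1 n2] ab
    by (rule c_diagonal_blk_if_weight_preserving)
  moreover have "blk (Rmat sq qh n1 n2 t) (n2+1) a b \<in> carrier_mat (n2+1) (n2+1)"
    by (simp add: blk_def)
  ultimately show ?thesis
    using c_diagonal_eq_zero by force
qed

end
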